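(* Let $\lambda$ be a partition with $d$ distinct part sizes and parameters $(h_1,\dots,h_d)$, $(v_1,\dots,v_d)$. Put $x_i=h_{1,i}$, $y_i=v_{1,i}$ for $1\le i\le d$ and $x_0=y_0=0$. Then for $0\le s\le d$, \[ p_{0,s}=\frac{\prod_{i=1}^d(q^{x_s}t^{y_s}-q^{x_{i-1}}t^{y_i})}{\prod_{i=0,i\ne s}^d(q^{x_s}t^{y_s}-q^{x_i}t^{y_i})},\qquad \overline{p}_{0,s}=\frac{\prod_{i=1}^d(q^{x_s-1}t^{y_s+1}-q^{x_{i-1}}t^{y_i})}{\prod_{i=0,i\ne s}^d(q^{x_s-1}t^{y_s+1}-q^{x_i}t^{y_i})}, \] and for $1\le r\le d$, \[ p_{r,s}=\prod_{i=0,i\ne s}^d\frac{q^{x_{r-1}+1}t^{y_r-1}-q^{x_i}t^{y_i}}{q^{x_s}t^{y_s}-q^{x_i}t^{y_i}}\prod_{i=1,i\ne r}^d\frac{q^{x_s}t^{y_s}-q^{x_{i-1}}t^{y_i}}{q^{x_{r-1}+1}t^{y_r-1}-q^{x_{i-1}}t^{y_i}}, \] \[ \overline{p}_{r,s}=\prod_{i=0,i\ne s}^d\frac{q^{x_{r-1}}t^{y_r}-q^{x_i}t^{y_i}}{q^{x_s-1}t^{y_s+1}-q^{x_i}t^{y_i}}\prod_{i=1,i\ne r}^d\frac{q^{x_s-1}t^{y_s+1}-q^{x_{i-1}}t^{y_i}}{q^{x_{r-1}}t^{y_r}-q^{x_{i-1}}t^{y_i}}. \]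
   Context: Partitions are Young diagrams in French convention (cells $(x,y)\in\mathbb{Z}_{>0}^2$, $x\le\lambda_y$), $\lambda'$ the conjugate; for $c=(x,y)\in\lambda$, $a_\lambda(c)=\lambda_y-x$, $\ell_\lambda(c)=\lambda'_x-y$; $n(\kappa)=\sum_{c\in\kappa}\ell_\kappa(c)$, $n'(\kappa)=\sum_{c\in\kappa}a_\kappa(c)$, $n(\rho/\kappa)=n(\rho)-n(\kappa)$, $n'(\rho/\kappa)=n'(\rho)-n'(\kappa)$. For $\kappa\subseteq\rho$, $\mathcal{R}_{\rho/\kappa}$ (resp. $\mathcal{C}_{\rho/\kappa}$): cells of $\kappa$ in a row (resp. column) containing a cell of $\rho/\kappa$. $[i,j]=1-q^it^j$. For $\kappa\lessdot\rho$ (one-cell difference): $\alpha_{\rho/\kappa}=\prod_{c\in\mathcal{R}_{\rho/\kappa}}\frac{[a_\kappa(c),\ell_\kappa(c)+1]}{[a_\rho(c),\ell_\rho(c)+1]}\prod_{c\in\mathcal{C}_{\rho/\kappa}}\frac{[a_\kappa(c)+1,\ell_\kappa(c)]}{[a_\rho(c)+1,\ell_\rho(c)]}$, $\overline{\alpha}_{\rho/\kappa}=\prod_{c\in\mathcal{R}_{\rho/\kappa}}\frac{[a_\kappa(c)+1,\ell_\kappa(c)]}{[a_\rho(c)+1,\ell_\rho(c)]}\prod_{c\in\mathcal{C}_{\rho/\kappa}}\frac{[a_\kappa(c),\ell_\kappa(c)+1]}{[a_\rho(c),\ell_\rho(c)+1]}$, $\beta=1/\alpha$, $\overline{\beta}=1/\overline{\alpha}$.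 For $\mu\lessdot\lambda\lessdot\nu$, with $A=n'(\lambda/\mu)-n'(\nu/\lambda)$, $B=n(\nu/\lambda)-n(\lambda/\mu)$: $\gamma_{\nu/\lambda/\mu}=\frac{(1-q^At^B)(1-q^{A+1}t^{B-1})}{(1-q)(1-t)}$. Probabilities: $\mathcal{P}_\lambda(\lambda\rightarrow\nu)=t^{n(\nu/\lambda)}\alpha_{\nu/\lambda}$, $\overline{\mathcal{P}}_\lambda(\lambda\leftarrow\nu)=t^{n(\nu/\lambda)}\overline{\alpha}_{\nu/\lambda}$, and for $\mu\lessdot\lambda$: $\mathcal{P}_\lambda(\mu\rightarrow\nu)=t^{B-1}\alpha_{\nu/\lambda}\beta_{\lambda/\mu}/\gamma_{\nu/\lambda/\mu}$, $\overline{\mathcal{P}}_\lambda(\mu\leftarrow\nu)=t^{B-1}\overline{\alpha}_{\nu/\lambda}\overline{\beta}_{\lambda/\mu}/\gamma_{\nu/\lambda/\mu}$. Parameters: if $\lambda$ has distinct part sizes $u_1>\dots>u_d>0$, $v_i$ is the multiplicity of $u_i$ and $h_i=u_i-u_{i+1}$ ($u_{d+1}=0$); $h_{i,j}=h_i+\dots+h_j$, $v_{i,j}=v_i+\dots+v_j$ for $i\le j$. For $0\le s\le d$, $\lambda^{(+s)}$ is obtained by adding a cell in row $v_{1,s}+1$; $\lambda^{(-0)}=\lambda$, and for $1\le r\le d$, $\lambda^{(-r)}$ is obtained by removing a cell from row $v_{1,r}$. $p_{r,s}=\mathcal{P}_\lambda(\lambda^{(-r)}\rightarrow\lambda^{(+s)})$,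 $\overline{p}_{r,s}=\overline{\mathcal{P}}_\lambda(\lambda^{(-r)}\leftarrow\lambda^{(+s)})$. *)

theory Defs
  imports Main
begin

text \<open>A partition is a weakly decreasing list of positive naturals; row y (1-based) has
length prt lam y. Cells are pairs (x,y) with 1 <= x <= lam_y.\<close>

definition is_partition :: "nat list \<Rightarrow> bool" where
  "is_partition lam \<longleftrightarrow> sorted_wrt (\<ge>) lam \<and> (\<forall>p\<in>set lam. 0 < p)"

definition prt :: "nat list \<Rightarrow> nat \<Rightarrow> nat" where
  "prt lam y = (if 0 < y \<and> y \<le> length lam then lam ! (y - 1) else 0)"

definition conjp :: "nat list \<Rightarrow> nat \<Rightarrow> nat" where
  "conjp lam x = card {y. 0 < y \<and> x \<le> prt lam y}"

definition cells :: "nat list \<Rightarrow> (nat \<times> nat) set" where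
  "cells lam = {(x, y). 0 < x \<and> 0 < y \<and> x \<le> prt lam y}"

definition arm :: "nat list \<Rightarrow> nat \<times> nat \<Rightarrow> nat" where
  "arm lam c = prt lam (snd c) - fst c"

definition leg :: "nat list \<Rightarrow> nat \<times> nat \<Rightarrow> nat" where
  "leg lam c = conjp lam (fst c) - snd c"

definition nn :: "nat list \<Rightarrow> nat" where
  "nn lam = (\<Sum>c\<in>cells lam. leg lam c)"

definition nn' :: "nat list \<Rightarrow> nat" where
  "nn' lam = (\<Sum>c\<in>cells lam. arm lam c)"

definition nn_skew :: "nat list \<Rightarrow> nat list \<Rightarrow> int" where
  "nn_skew rho kappa = int (nn rho) - int (nn kappa)"

definition nn'_skew :: "nat list \<Rightarrow> nat list \<Rightarrow> int" where
  "nn'_skew rho kappa = int (nn' rho) - int (nn' kappa)"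

definition Rset :: "nat list \<Rightarrow> nat list \<Rightarrow> (nat \<times> nat) set" where
  "Rset rho kappa = {c \<in> cells kappa. \<exists>c'\<in>cells rho - cells kappa. snd c' = snd c}"

definition Cset :: "nat list \<Rightarrow> nat list \<Rightarrow> (nat \<times> nat) set" where
  "Cset rho kappa = {c \<in> cells kappa. \<exists>c'\<in>cells rho - cells kappa. fst c' = fst c}"

definition mon :: "'a::field \<Rightarrow> 'a \<Rightarrow> int \<Rightarrow> int \<Rightarrow> 'a" where
  "mon q t a b = q powi a * t powi b"

definition brk :: "'a::field \<Rightarrow> 'a \<Rightarrow> int \<Rightarrow> int \<Rightarrow> 'a" where
  "brk q t i j = 1 - mon q t i j"

definition alpha :: "'a::field \<Rightarrow> 'a \<Rightarrow> nat list \<Rightarrow> nat list \<Rightarrow> 'a" where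
  "alpha q t rho kappa =
     (\<Prod>c\<in>Rset rho kappa.
        brk q t (int (arm kappa c)) (int (leg kappa c) + 1) / brk q t (int (arm rho c)) (int (leg rho c) + 1)) *
     (\<Prod>c\<in>Cset rho kappa.
        brk q t (int (arm kappa c) + 1) (int (leg kappa c)) / brk q t (int (arm rho c) + 1) (int (leg rho c)))"

definition alphabar :: "'a::field \<Rightarrow> 'a \<Rightarrow> nat list \<Rightarrow> nat list \<Rightarrow> 'a" where
  "alphabar q t rho kappa =
     (\<Prod>c\<in>Rset rho kappa.
        brk q t (int (arm kappa c) + 1) (int (leg kappa c)) / brk q t (int (arm rho c) + 1) (int (leg rho c))) *
     (\<Prod>c\<in>Cset rho kappa.
        brk q t (int (arm kappa c)) (int (leg kappa c) + 1) / brk q t (int (arm rho c)) (int (leg rho c) + 1))"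

definition beta :: "'a::field \<Rightarrow> 'a \<Rightarrow> nat list \<Rightarrow> nat list \<Rightarrow> 'a" where
  "beta q t rho kappa = 1 / alpha q t rho kappa"

definition betabar :: "'a::field \<Rightarrow> 'a \<Rightarrow> nat list \<Rightarrow> nat list \<Rightarrow> 'a" where
  "betabar q t rho kappa = 1 / alphabar q t rho kappa"

definition Aexp :: "nat list \<Rightarrow> nat list \<Rightarrow> nat list \<Rightarrow> int" where
  "Aexp nu lam mu = nn'_skew lam mu - nn'_skew nu lam"

definition Bexp :: "nat list \<Rightarrow> nat list \<Rightarrow> nat list \<Rightarrow> int" where
  "Bexp nu lam mu = nn_skew nu lam - nn_skew lam mu"

definition gamma :: "'a::field \<Rightarrow> 'a \<Rightarrow> nat list \<Rightarrow> nat list \<Rightarrow> nat list \<Rightarrow> 'a" where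
  "gamma q t nu lam mu =
     (1 - mon q t (Aexp nu lam mu) (Bexp nu lam mu)) *
     (1 - mon q t (Aexp nu lam mu + 1) (Bexp nu lam mu - 1)) / ((1 - q) * (1 - t))"

definition P1 :: "'a::field \<Rightarrow> 'a \<Rightarrow> nat list \<Rightarrow> nat list \<Rightarrow> 'a" where
  "P1 q t lam nu = t powi (nn_skew nu lam) * alpha q t nu lam"

definition P1bar :: "'a::field \<Rightarrow> 'a \<Rightarrow> nat list \<Rightarrow> nat list \<Rightarrow> 'a" where
  "P1bar q t lam nu = t powi (nn_skew nu lam) * alphabar q t nu lam"

definition P2 :: "'a::field \<Rightarrow> 'a \<Rightarrow> nat list \<Rightarrow> nat list \<Rightarrow> nat list \<Rightarrow> 'a" where
  "P2 q t lam mu nu = t powi (Bexp nu lam mu - 1) * alpha q t nu lam * beta q t lam mu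
                        / gamma q t nu lam mu"

definition P2bar :: "'a::field \<Rightarrow> 'a \<Rightarrow> nat list \<Rightarrow> nat list \<Rightarrow> nat list \<Rightarrow> 'a" where
  "P2bar q t lam mu nu = t powi (Bexp nu lam mu - 1) * alphabar q t nu lam * betabar q t lam mu
                        / gamma q t nu lam mu"

definition dps :: "nat list \<Rightarrow> nat list" where
  "dps lam = rev (sorted_list_of_set (set lam))"

definition ndist :: "nat list \<Rightarrow> nat" where
  "ndist lam = length (dps lam)"

text \<open>u_i for 1 <= i <= d, and u_{d+1} = 0\<close>
definition u :: "nat list \<Rightarrow> nat \<Rightarrow> nat" where
  "u lam i = (if 1 \<le> i \<and> i \<le> ndist lam then dps lam ! (i - 1) else 0)"

definition v :: "nat list \<Rightarrow> nat \<Rightarrow> nat" where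
  "v lam i = length (filter (\<lambda>p. p = u lam i) lam)"

definition h :: "nat list \<Rightarrow> nat \<Rightarrow> int" where
  "h lam i = int (u lam i) - int (u lam (i + 1))"

definition xs :: "nat list \<Rightarrow> nat \<Rightarrow> int" where
  "xs lam i = (\<Sum>j\<in>{1..i}. h lam j)"

definition ys :: "nat list \<Rightarrow> nat \<Rightarrow> int" where
  "ys lam i = (\<Sum>j\<in>{1..i}. int (v lam j))"

text \<open>add a cell in row k (1-based), remove a cell from row k\<close>
definition add_cell :: "nat list \<Rightarrow> nat \<Rightarrow> nat list" where
  "add_cell lam k = (if k \<le> length lam then lam[k - 1 := lam ! (k - 1) + 1] else lam @ [1])"

definition remove_cell :: "nat list \<Rightarrow> nat \<Rightarrow> nat list" where
  "remove_cell lam k = filter (\<lambda>p. 0 < p) (lam[k - 1 := lam ! (k - 1) - 1])"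

definition lam_plus :: "nat list \<Rightarrow> nat \<Rightarrow> nat list" where
  "lam_plus lam s = add_cell lam (nat (ys lam s) + 1)"

definition lam_minus :: "nat list \<Rightarrow> nat \<Rightarrow> nat list" where
  "lam_minus lam r = (if r = 0 then lam else remove_cell lam (nat (ys lam r)))"

definition pp :: "'a::field \<Rightarrow> 'a \<Rightarrow> nat list \<Rightarrow> nat \<Rightarrow> nat \<Rightarrow> 'a" where
  "pp q t lam r s = (if r = 0 then P1 q t lam (lam_plus lam s)
                     else P2 q t lam (lam_minus lam r) (lam_plus lam s))"

definition ppbar :: "'a::field \<Rightarrow> 'a \<Rightarrow> nat list \<Rightarrow> nat \<Rightarrow> nat \<Rightarrow> 'a" where
  "ppbar q t lam r s = (if r = 0 then P1bar q t lam (lam_plus lam s)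
                       else P2bar q t lam (lam_minus lam r) (lam_plus lam s))"

end

theory Submission
  imports Defs
begin

text \<open>
  Both \<alpha> and \<alpha>bar are the cases e = 0 and e = 1 of one hook product whose factors over the row
  and over the column of the changed cell carry the offsets (e, 1 - e) and (1 - e, e). When a single
  cell is added to or removed from \<lambda>, arms and legs change only along that row and that column, and
  inside a block of columns of equal height, or of rows of equal length, consecutive factors
  telescope. So \<alpha>(\<lambda>^(+s)/\<lambda>) and \<alpha>(\<lambda>/\<lambda>^(-r)) collapse to one ratio [a, b] / [a', b'] per
  block of \<lambda>. Writing [a, b] = 1 - q^a t^b as a difference of two cell weights divided by a weight
  turns these into the products of the statement; the leftover monomials cancel against the
  powers of t and against \<gamma>.
\<close>

lemma prt_beyond_length: "length l < y \<Longrightarrow> prt l y = 0"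
  unfolding prt_def by simp

lemma prt_in_set: "0 < y \<Longrightarrow> y \<le> length l \<Longrightarrow> prt l y \<in> set l"
  unfolding prt_def by simp

lemma prt_list_update: "k < length l \<Longrightarrow> prt (l[k := a]) y = (if y = Suc k then a else prt l y)"
  unfolding prt_def by (auto simp: nth_list_update)

lemma prt_append_single: "prt (l @ [a]) y = (if y = Suc (length l) then a else prt l y)"
  unfolding prt_def by (auto simp: nth_append)

lemma finite_cells: "finite (cells l)"
proof (rule finite_subset)
  show "cells l \<subseteq> {0..sum_list l} \<times> {0..length l}"
  proof
    fix c assume "c \<in> cells l"
    then obtain x y where c: "c = (x, y)" "0 < x" "0 < y" "x \<le> prt l y"
      unfolding cells_def by auto
    then have "y \<le> length l" "prt l y \<le> sum_list l"
      unfolding prt_def by (auto split: if_splits intro: member_le_sum_list)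
    then show "c \<in> {0..sum_list l} \<times> {0..length l}" using c by auto
  qed
qed simp

lemma finite_column: "0 < x \<Longrightarrow> finite {y. 0 < y \<and> x \<le> prt l y}"
  by (rule finite_subset[of _ "{0..length l}"]) (auto simp: prt_def split: if_splits)

lemma length_filter_disj:
  "(\<And>p. p \<in> set l \<Longrightarrow> \<not> (P p \<and> Q p)) \<Longrightarrow>
   length (filter (\<lambda>p. P p \<or> Q p) l) = length (filter P l) + length (filter Q l)"
  by (induction l) auto

lemma sorted_ge_nth_iff_less_length_filter:
  assumes "sorted_wrt (\<ge>) (l :: nat list)" "i < length l"
  shows "c \<le> l ! i \<longleftrightarrow> i < length (filter (\<lambda>p. c \<le> p) l)"
  using assms
proof (induction l arbitrary: i)
  case (Cons a l)
  show ?case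
  proof (cases "c \<le> a")
    case True
    then show ?thesis using Cons by (cases i) auto
  next
    case False
    then have "filter (\<lambda>p. c \<le> p) (a # l) = []"
      using Cons.prems(1) by (fastforce simp: filter_empty_conv)
    moreover have "(a # l) ! i \<le> a"
      using Cons.prems by (cases i) auto
    ultimately show ?thesis using False by simp
  qed
qed simp

lemma prod_greaterThanAtMost_telescope:
  fixes f :: "nat \<Rightarrow> 'a::field"
  assumes "m \<le> n" "\<And>i. m \<le> i \<Longrightarrow> i \<le> n \<Longrightarrow> f i \<noteq> 0"
  shows "(\<Prod>i\<in>{m<..n}. f i / f (i - 1)) = f n / f m"
  using prod_telescope''[of m n f] assms by (simp add: atLeastSucAtMost_greaterThanAtMost)

lemma prod_blocks_telescope_mono:
  fixes F :: "nat \<Rightarrow> 'a::field" and G :: "nat \<Rightarrow> nat \<Rightarrow> 'a" and V :: "nat \<Rightarrow> nat"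
  assumes "mono V"
    and F: "\<And>j y. 0 < j \<Longrightarrow> j \<le> s \<Longrightarrow> V (j - 1) < y \<Longrightarrow> y \<le> V j \<Longrightarrow> F y = G j y / G j (y - 1)"
    and nz: "\<And>j y. 0 < j \<Longrightarrow> j \<le> s \<Longrightarrow> V (j - 1) \<le> y \<Longrightarrow> y \<le> V j \<Longrightarrow> G j y \<noteq> 0"
  shows "(\<Prod>y\<in>{V 0<..V s}. F y) = (\<Prod>j\<in>{0<..s}. G j (V j) / G j (V (j - 1)))"
  using F nz
proof (induction s)
  case (Suc s)
  have "V 0 \<le> V s" "V s \<le> V (Suc s)" using monoD[OF \<open>mono V\<close>] by simp_all
  then have "{V 0<..V (Suc s)} = {V 0<..V s} \<union> {V s<..V (Suc s)}" by auto
  then have "(\<Prod>y\<in>{V 0<..V (Suc s)}. F y) = (\<Prod>y\<in>{V 0<..V s}. F y) * (\<Prod>y\<in>{V s<..V (Suc s)}. F y)"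
    by (simp add: prod.union_disjoint)
  also have "(\<Prod>y\<in>{V s<..V (Suc s)}. F y) = (\<Prod>y\<in>{V s<..V (Suc s)}. G (Suc s) y / G (Suc s) (y - 1))"
    using Suc.prems(1)[of "Suc s"] by simp
  also have "\<dots> = G (Suc s) (V (Suc s)) / G (Suc s) (V s)"
    by (rule prod_greaterThanAtMost_telescope) (use \<open>V s \<le> V (Suc s)\<close> Suc.prems(2) in auto)
  moreover have "{0<..Suc s} = insert (Suc s) {0<..s}" by auto
  ultimately show ?case using Suc by (simp add: mult.commute)
qed simp

lemma prod_blocks_telescope_antimono:
  fixes F :: "nat \<Rightarrow> 'a::field" and H :: "nat \<Rightarrow> nat \<Rightarrow> 'a" and U :: "nat \<Rightarrow> nat"
  assumes "s \<le> n" and antimono: "\<And>i j. s < i \<Longrightarrow> i \<le> j \<Longrightarrow> U j \<le> U i"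
    and F: "\<And>j x. s < j \<Longrightarrow> j \<le> n \<Longrightarrow> U (Suc j) < x \<Longrightarrow> x \<le> U j \<Longrightarrow> F x = H j x / H j (x - 1)"
    and nz: "\<And>j x. s < j \<Longrightarrow> j \<le> n \<Longrightarrow> U (Suc j) \<le> x \<Longrightarrow> x \<le> U j \<Longrightarrow> H j x \<noteq> 0"
  shows "(\<Prod>x\<in>{U (Suc n)<..U (Suc s)}. F x) = (\<Prod>j\<in>{s<..n}. H j (U j) / H j (U (Suc j)))"
  using assms(1) F nz
proof (induction n)
  case (Suc n)
  show ?case
  proof (cases "s = Suc n")
    case False
    then have "s \<le> n" using Suc.prems(1) by simp
    have "U (Suc n) \<le> U (Suc s)" "U (Suc (Suc n)) \<le> U (Suc n)"
      using antimono \<open>s \<le> n\<close> by simp_all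
    then have "{U (Suc (Suc n))<..U (Suc s)} = {U (Suc n)<..U (Suc s)} \<union> {U (Suc (Suc n))<..U (Suc n)}"
      by auto
    then have "(\<Prod>x\<in>{U (Suc (Suc n))<..U (Suc s)}. F x) =
        (\<Prod>x\<in>{U (Suc n)<..U (Suc s)}. F x) * (\<Prod>x\<in>{U (Suc (Suc n))<..U (Suc n)}. F x)"
      by (simp add: prod.union_disjoint)
    also have "(\<Prod>x\<in>{U (Suc (Suc n))<..U (Suc n)}. F x) =
        (\<Prod>x\<in>{U (Suc (Suc n))<..U (Suc n)}. H (Suc n) x / H (Suc n) (x - 1))"
      using Suc.prems(2)[of "Suc n"] \<open>s \<le> n\<close> by simp
    also have "\<dots> = H (Suc n) (U (Suc n)) / H (Suc n) (U (Suc (Suc n)))"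
      by (rule prod_greaterThanAtMost_telescope)
        (use \<open>U (Suc (Suc n)) \<le> U (Suc n)\<close> Suc.prems(3) \<open>s \<le> n\<close> in auto)
    moreover have "{s<..Suc n} = insert (Suc n) {s<..n}" using \<open>s \<le> n\<close> by auto
    ultimately show ?thesis using Suc \<open>s \<le> n\<close> by (simp add: mult.commute)
  qed simp
qed simp

lemma prod_shift_greaterThanAtMost:
  fixes g :: "nat \<Rightarrow> 'a::comm_monoid_mult"
  shows "(\<Prod>i\<in>{0<..s}. g (i - 1)) = (\<Prod>i\<in>{0..<s}. g i)"
proof -
  have "{0<..s} = {Suc 0..<Suc s}" by auto
  then show ?thesis using prod.atLeast_lessThan_pred_shift[of g 0 s] by (simp add: comp_def)
qed

lemma prod_divide_split_at:
  fixes f g :: "nat \<Rightarrow> 'a::field"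
  assumes "s \<le> n"
  shows "(\<Prod>i\<in>{1..n}. f i) / (\<Prod>i\<in>{0..n} - {s}. g i) =
    (\<Prod>i\<in>{s<..n}. f i / g i) * (\<Prod>i\<in>{0<..s}. f i / g (i - 1))"
proof -
  have "{1..n} = {0<..s} \<union> {s<..n}" "{0..n} - {s} = {0..<s} \<union> {s<..n}" using assms by auto
  moreover have "(\<Prod>i\<in>{0..<s} \<union> {s<..n}. g i) = (\<Prod>i\<in>{0..<s}. g i) * (\<Prod>i\<in>{s<..n}. g i)"
    "(\<Prod>i\<in>{0<..s} \<union> {s<..n}. f i) = (\<Prod>i\<in>{0<..s}. f i) * (\<Prod>i\<in>{s<..n}. f i)"
    by (rule prod.union_disjoint; auto)+
  ultimately show ?thesis by (simp add: prod_dividef prod_shift_greaterThanAtMost[symmetric] ac_simps)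
qed

lemma prod_divide_split_around:
  fixes f g :: "nat \<Rightarrow> 'a::field"
  assumes "1 \<le> r" "r \<le> n"
  shows "(\<Prod>i\<in>{1..n} - {r}. f i) / (\<Prod>i\<in>{0..n}. g i) =
    (\<Prod>i\<in>{r<..n}. f i / g i) * (\<Prod>i\<in>{0<..<r}. f i / g (i - 1)) / (g (r - 1) * g r)"
proof -
  have "{1..n} - {r} = {0<..r - 1} \<union> {r<..n}"
    "{0..n} = insert r (insert (r - 1) ({0..<r - 1} \<union> {r<..n}))" "{0<..<r} = {0<..r - 1}"
    using assms by auto
  moreover have "(\<Prod>i\<in>{0..<r - 1} \<union> {r<..n}. g i) = (\<Prod>i\<in>{0..<r - 1}. g i) * (\<Prod>i\<in>{r<..n}. g i)"
    "(\<Prod>i\<in>{0<..r - 1} \<union> {r<..n}. f i) = (\<Prod>i\<in>{0<..r - 1}. f i) * (\<Prod>i\<in>{r<..n}. f i)"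
    by (rule prod.union_disjoint; auto)+
  moreover have "r \<notin> insert (r - 1) ({0..<r - 1} \<union> {r<..n})" "r - 1 \<notin> {0..<r - 1} \<union> {r<..n}"
    using assms by auto
  ultimately show ?thesis by (simp add: prod_dividef prod_shift_greaterThanAtMost[symmetric] ac_simps)
qed

section \<open>Adding one cell\<close>

definition hook_ratio ::
    "'a::field \<Rightarrow> 'a \<Rightarrow> int \<Rightarrow> int \<Rightarrow> nat list \<Rightarrow> nat list \<Rightarrow> (nat \<times> nat) set \<Rightarrow> 'a" where
  "hook_ratio q t i j rho kappa S =
     (\<Prod>c\<in>S. brk q t (int (arm kappa c) + i) (int (leg kappa c) + j) /
             brk q t (int (arm rho c) + i) (int (leg rho c) + j))"

definition alpha_e :: "'a::field \<Rightarrow> 'a \<Rightarrow> int \<Rightarrow> nat list \<Rightarrow> nat list \<Rightarrow> 'a" where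
  "alpha_e q t e rho kappa =
     hook_ratio q t e (1 - e) rho kappa (Rset rho kappa) *
     hook_ratio q t (1 - e) e rho kappa (Cset rho kappa)"

lemma alpha_eq_alpha_e: "alpha q t rho kappa = alpha_e q t 0 rho kappa"
  unfolding alpha_def alpha_e_def hook_ratio_def by simp

lemma alphabar_eq_alpha_e: "alphabar q t rho kappa = alpha_e q t 1 rho kappa"
  unfolding alphabar_def alpha_e_def hook_ratio_def by simp

locale cell_extension =
  fixes kappa rho :: "nat list" and x0 y0 :: nat
  assumes x0_pos: "0 < x0" and y0_pos: "0 < y0"
    and prt_rho: "\<And>y. prt rho y = (if y = y0 then x0 else prt kappa y)"
    and prt_kappa_y0: "prt kappa y0 = x0 - 1"
    and column_x0: "\<And>y. 0 < y \<Longrightarrow> x0 \<le> prt kappa y \<longleftrightarrow> y < y0"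
begin

lemma conjp_kappa_x0: "conjp kappa x0 = y0 - 1"
proof -
  have "{y. 0 < y \<and> x0 \<le> prt kappa y} = {0<..<y0}"
    using column_x0 by auto
  then show ?thesis unfolding conjp_def by simp
qed

lemma conjp_rho: "conjp rho x = (if x = x0 then y0 else conjp kappa x)"
proof (cases "x = x0")
  case True
  have "{y. 0 < y \<and> x0 \<le> prt rho y} = {0<..y0}"
    using column_x0 prt_rho y0_pos by auto
  then show ?thesis using True unfolding conjp_def by simp
next
  case False
  have "{y. 0 < y \<and> x \<le> prt rho y} = {y. 0 < y \<and> x \<le> prt kappa y}"
    using prt_rho prt_kappa_y0 False x0_pos by auto
  then show ?thesis using False unfolding conjp_def by simp
qed

lemma conjp_kappa_ge: "0 < x \<Longrightarrow> x < x0 \<Longrightarrow> y0 \<le> conjp kappa x"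
proof -
  assume x: "0 < x" "x < x0"
  have "{0<..y0} \<subseteq> {y. 0 < y \<and> x \<le> prt kappa y}"
  proof
    fix y assume "y \<in> {0<..y0}"
    then show "y \<in> {y. 0 < y \<and> x \<le> prt kappa y}"
      using column_x0[of y] prt_kappa_y0 x by (cases "y = y0") auto
  qed
  from card_mono[OF finite_column[OF x(1)] this] show ?thesis
    unfolding conjp_def by simp
qed

lemma cells_rho: "cells rho = insert (x0, y0) (cells kappa)"
  unfolding cells_def using prt_rho prt_kappa_y0 x0_pos y0_pos by auto

lemma new_cell_notin: "(x0, y0) \<notin> cells kappa"
  unfolding cells_def using prt_kappa_y0 x0_pos by auto

lemma cells_diff: "cells rho - cells kappa = {(x0, y0)}"
  unfolding cells_rho using new_cell_notin by auto

lemma cells_in_row_y0: "{c \<in> cells kappa. snd c = y0} = (\<lambda>x. (x, y0)) ` {0<..<x0}"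
  unfolding cells_def using prt_kappa_y0 x0_pos y0_pos by auto

lemma cells_in_column_x0: "{c \<in> cells kappa. fst c = x0} = (\<lambda>y. (x0, y)) ` {0<..<y0}"
  unfolding cells_def using column_x0 x0_pos by auto

lemma Rset_eq: "Rset rho kappa = (\<lambda>x. (x, y0)) ` {0<..<x0}"
  unfolding cells_in_row_y0[symmetric] Rset_def cells_diff by auto

lemma Cset_eq: "Cset rho kappa = (\<lambda>y. (x0, y)) ` {0<..<y0}"
  unfolding cells_in_column_x0[symmetric] Cset_def cells_diff by auto

lemma hook_ratio_Rset:
  "hook_ratio q t i j rho kappa (Rset rho kappa) =
    (\<Prod>x\<in>{0<..<x0}. brk q t (int x0 - 1 - int x + i) (int (conjp kappa x) - int y0 + j) /
                     brk q t (int x0 - int x + i) (int (conjp kappa x) - int y0 + j))"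
proof -
  have "int (arm kappa (x, y0)) = int x0 - 1 - int x" "int (arm rho (x, y0)) = int x0 - int x"
    "int (leg kappa (x, y0)) = int (conjp kappa x) - int y0"
    "int (leg rho (x, y0)) = int (conjp kappa x) - int y0"
    if "0 < x" "x < x0" for x
    using that conjp_kappa_ge[OF that] prt_kappa_y0 conjp_rho[of x]
    unfolding arm_def leg_def prt_rho by auto
  then show ?thesis
    unfolding hook_ratio_def Rset_eq by (simp add: prod.reindex inj_on_def)
qed

lemma hook_ratio_Cset:
  "hook_ratio q t i j rho kappa (Cset rho kappa) =
    (\<Prod>y\<in>{0<..<y0}. brk q t (int (prt kappa y) - int x0 + i) (int y0 - 1 - int y + j) /
                     brk q t (int (prt kappa y) - int x0 + i) (int y0 - int y + j))"
proof -
  have "int (arm kappa (x0, y)) = int (prt kappa y) - int x0"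
    "int (arm rho (x0, y)) = int (prt kappa y) - int x0"
    "int (leg kappa (x0, y)) = int y0 - 1 - int y" "int (leg rho (x0, y)) = int y0 - int y"
    if "0 < y" "y < y0" for y
    using that column_x0[of y] conjp_rho[of x0] conjp_kappa_x0
    unfolding arm_def leg_def prt_rho by auto
  then show ?thesis
    unfolding hook_ratio_def Cset_eq by (simp add: prod.reindex inj_on_def)
qed

lemma nn_skew_eq: "nn_skew rho kappa = int y0 - 1"
proof -
  have leg_rho: "int (leg rho c) = int (leg kappa c) + (if fst c = x0 then 1 else 0)"
    if c_in: "c \<in> cells kappa" for c
  proof -
    obtain x y where c: "c = (x, y)" "0 < y" "x \<le> prt kappa y"
      using c_in unfolding cells_def by (cases c) auto
    then have "x = x0 \<Longrightarrow> y < y0" using column_x0[of y] by simp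
    then show ?thesis
      using c conjp_rho[of x] conjp_kappa_x0 unfolding leg_def by auto
  qed
  have "card {c \<in> cells kappa. fst c = x0} = y0 - 1"
    unfolding cells_in_column_x0 by (simp add: card_image inj_on_def)
  moreover have "leg rho (x0, y0) = 0"
    unfolding leg_def using conjp_rho by simp
  ultimately have "int (nn rho) = int (nn kappa) + int (y0 - 1)"
    unfolding nn_def cells_rho using finite_cells[of kappa] new_cell_notin
    by (simp add: leg_rho sum.distrib sum.If_cases Int_def conj_commute cong: sum.cong)
  then show ?thesis unfolding nn_skew_def using y0_pos by simp
qed

lemma nn'_skew_eq: "nn'_skew rho kappa = int x0 - 1"
proof -
  have arm_rho: "int (arm rho c) = int (arm kappa c) + (if snd c = y0 then 1 else 0)"
    if c_in: "c \<in> cells kappa" for c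
  proof -
    obtain x y where c: "c = (x, y)" "x \<le> prt kappa y"
      using c_in unfolding cells_def by (cases c) auto
    then show ?thesis using prt_rho[of y] prt_kappa_y0 x0_pos unfolding arm_def by auto
  qed
  have "card {c \<in> cells kappa. snd c = y0} = x0 - 1"
    unfolding cells_in_row_y0 by (simp add: card_image inj_on_def)
  moreover have "arm rho (x0, y0) = 0"
    unfolding arm_def using prt_rho by simp
  ultimately have "int (nn' rho) = int (nn' kappa) + int (x0 - 1)"
    unfolding nn'_def cells_rho using finite_cells[of kappa] new_cell_notin
    by (simp add: arm_rho sum.distrib sum.If_cases Int_def conj_commute cong: sum.cong)
  then show ?thesis unfolding nn'_skew_def using x0_pos by simp
qed

end

section \<open>The blocks of equal parts of a partition\<close>

definition vsum :: "nat list \<Rightarrow> nat \<Rightarrow> nat" where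
  "vsum lam j = (\<Sum>i\<in>{1..j}. v lam i)"

lemma ys_eq_vsum: "ys lam j = int (vsum lam j)"
  unfolding ys_def vsum_def by simp

lemma xs_eq: "xs lam j = int (u lam 1) - int (u lam (Suc j))"
  by (induction j) (simp_all add: xs_def h_def)

lemma mono_vsum: "mono (vsum lam)"
  unfolding vsum_def by (intro monoI sum_mono2) auto

locale young =
  fixes lam :: "nat list"
  assumes partition: "is_partition lam"
begin

abbreviation d where "d \<equiv> ndist lam"
abbreviation U where "U \<equiv> u lam"
abbreviation V where "V \<equiv> vsum lam"

lemma sorted_lam: "sorted_wrt (\<ge>) lam"
  using partition unfolding is_partition_def by simp

lemma parts_pos: "p \<in> set lam \<Longrightarrow> 0 < p"
  using partition unfolding is_partition_def by simp

lemma set_dps: "set (dps lam) = set lam"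
  unfolding dps_def by simp

lemma u_in_set: "1 \<le> i \<Longrightarrow> i \<le> d \<Longrightarrow> U i \<in> set lam"
  using nth_mem[of "i - 1" "dps lam"] set_dps unfolding u_def ndist_def by simp

lemma u_pos: "1 \<le> i \<Longrightarrow> i \<le> d \<Longrightarrow> 0 < U i"
  using u_in_set parts_pos by blast

lemma u_eq_0: "i = 0 \<or> d < i \<Longrightarrow> U i = 0"
  unfolding u_def by auto

lemma in_set_eq_u: "p \<in> set lam \<Longrightarrow> \<exists>i. 1 \<le> i \<and> i \<le> d \<and> p = U i"
proof -
  assume "p \<in> set lam"
  then obtain k where "k < length (dps lam)" "p = dps lam ! k"
    unfolding set_dps[symmetric] in_set_conv_nth by blast
  then show ?thesis unfolding u_def ndist_def by (intro exI[of _ "Suc k"]) simp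
qed

lemma u_less: "1 \<le> i \<Longrightarrow> i < j \<Longrightarrow> j \<le> Suc d \<Longrightarrow> U j < U i"
proof -
  assume ij: "1 \<le> i" "i < j" "j \<le> Suc d"
  have "sorted_wrt (>) (dps lam)"
    unfolding dps_def sorted_wrt_rev using strict_sorted_list_of_set[of "set lam"] by simp
  then show ?thesis
    using ij sorted_wrt_nth_less[of "(>)" "dps lam" "i - 1" "j - 1"] u_pos[of i]
    unfolding u_def ndist_def by (cases "j = Suc d") auto
qed

lemma u_antimono: "1 \<le> i \<Longrightarrow> i \<le> j \<Longrightarrow> U j \<le> U i"
  using u_less[of i j] u_eq_0[of j] by (cases "i = j \<or> Suc d < j") auto

lemma u_less_iff: "1 \<le> i \<Longrightarrow> 1 \<le> j \<Longrightarrow> j \<le> Suc d \<Longrightarrow> U j < U i \<longleftrightarrow> i < j"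
  using u_less[of i j] u_antimono[of j i] by (cases "i < j") auto

lemma v_pos: "1 \<le> j \<Longrightarrow> j \<le> d \<Longrightarrow> 0 < v lam j"
  unfolding v_def using u_in_set[of j] by (simp add: filter_empty_conv length_greater_0_conv)

lemma vsum_Suc: "V (Suc j) = V j + v lam (Suc j)"
  unfolding vsum_def by simp

lemma vsum_less: "i < j \<Longrightarrow> j \<le> d \<Longrightarrow> V i < V j"
proof -
  assume ij: "i < j" "j \<le> d"
  then have "V i \<le> V (j - 1)" using monoD[OF mono_vsum, of i "j - 1" lam] by simp
  then show ?thesis using vsum_Suc[of "j - 1"] v_pos[of j] ij by simp
qed

lemma length_filter_ge_u: "1 \<le> j \<Longrightarrow> j \<le> d \<Longrightarrow> length (filter (\<lambda>p. U j \<le> p) lam) = V j"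
proof (induction j rule: nat_induct_at_least)
  case base
  have "filter (\<lambda>p. U 1 \<le> p) lam = filter (\<lambda>p. p = U 1) lam"
  proof (rule filter_cong)
    fix p assume "p \<in> set lam"
    then obtain i where "1 \<le> i" "p = U i" using in_set_eq_u by blast
    then show "U 1 \<le> p \<longleftrightarrow> p = U 1" using u_antimono[of 1 i] by auto
  qed simp
  then show ?case unfolding vsum_def v_def by simp
next
  case (Suc j)
  have "filter (\<lambda>p. U (Suc j) \<le> p) lam = filter (\<lambda>p. U j \<le> p \<or> p = U (Suc j)) lam"
  proof (rule filter_cong)
    fix p assume "p \<in> set lam"
    then obtain i where "1 \<le> i" "i \<le> d" "p = U i" using in_set_eq_u by blast
    then show "U (Suc j) \<le> p \<longleftrightarrow> U j \<le> p \<or> p = U (Suc j)"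
      using u_less_iff[of "Suc j" i] u_less_iff[of j i] Suc
      by (cases "i = Suc j") (auto simp: not_less[symmetric])
  qed simp
  also have "length \<dots> = length (filter (\<lambda>p. U j \<le> p) lam) + length (filter (\<lambda>p. p = U (Suc j)) lam)"
    using u_less[of j "Suc j"] Suc by (intro length_filter_disj) auto
  finally show ?case using Suc unfolding vsum_Suc v_def by simp
qed

lemma vsum_ndist: "V d = length lam"
proof (cases "d = 0")
  case True
  then have "lam = []" using set_dps unfolding ndist_def by simp
  then show ?thesis using True by (simp add: vsum_def)
next
  case False
  have "filter (\<lambda>p. U d \<le> p) lam = lam"
    using in_set_eq_u u_antimono by (fastforce intro: filter_True)
  then show ?thesis using length_filter_ge_u[of d] False by simp
qed

lemma vsum_le_length: "j \<le> d \<Longrightarrow> V j \<le> length lam"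
  using monoD[OF mono_vsum, of j d lam] vsum_ndist by simp

lemma u_le_prt_iff: "1 \<le> j \<Longrightarrow> j \<le> d \<Longrightarrow> 0 < y \<Longrightarrow> U j \<le> prt lam y \<longleftrightarrow> y \<le> V j"
proof -
  assume j: "1 \<le> j" "j \<le> d" and y: "0 < y"
  show ?thesis
  proof (cases "y \<le> length lam")
    case True
    then have "prt lam y = lam ! (y - 1)" unfolding prt_def using y by simp
    then show ?thesis
      using sorted_ge_nth_iff_less_length_filter[OF sorted_lam, of "y - 1" "U j"]
        length_filter_ge_u[OF j] True y by auto
  next
    case False
    then show ?thesis using prt_beyond_length[of lam y] u_pos[OF j] vsum_le_length[OF j(2)] by simp
  qed
qed

lemma prt_cases: "prt lam y = 0 \<or> (\<exists>i. 1 \<le> i \<and> i \<le> d \<and> prt lam y = U i)"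
  using prt_in_set[of y lam] in_set_eq_u unfolding prt_def by (cases "0 < y \<and> y \<le> length lam") auto

lemma le_prt_iff_u_le_prt:
  assumes "1 \<le> j" "j \<le> d" "U (Suc j) < x" "x \<le> U j"
  shows "x \<le> prt lam y \<longleftrightarrow> U j \<le> prt lam y"
  using prt_cases[of y]
proof
  assume "\<exists>i. 1 \<le> i \<and> i \<le> d \<and> prt lam y = U i"
  then obtain i where i: "1 \<le> i" "i \<le> d" "prt lam y = U i" by blast
  show ?thesis
  proof (cases "i \<le> j")
    case True
    then show ?thesis using u_antimono[of i j] i assms by simp
  next
    case False
    then show ?thesis using u_antimono[of "Suc j" i] u_less[of j i] i assms by simp
  qed
qed (use assms in simp)

lemma u_Suc_less_prt_iff: "j \<le> d \<Longrightarrow> 0 < y \<Longrightarrow> U (Suc j) < prt lam y \<longleftrightarrow> y \<le> V j"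
proof (cases "j = 0")
  case True
  have "prt lam y \<le> U 1"
    using prt_cases[of y] u_antimono[of 1] by auto
  then show "0 < y \<Longrightarrow> ?thesis" using True by (simp add: vsum_def)
next
  case False
  assume j: "j \<le> d" "0 < y"
  have "U (Suc j) < U j" using u_less[of j "Suc j"] False j by simp
  then have "Suc (U (Suc j)) \<le> prt lam y \<longleftrightarrow> U j \<le> prt lam y"
    using False j by (intro le_prt_iff_u_le_prt) auto
  then show ?thesis using u_le_prt_iff[of j y] False j by (simp add: Suc_le_eq)
qed

lemma prt_eq_u: "1 \<le> j \<Longrightarrow> j \<le> d \<Longrightarrow> V (j - 1) < y \<Longrightarrow> y \<le> V j \<Longrightarrow> prt lam y = U j"
  using u_le_prt_iff[of j y] u_Suc_less_prt_iff[of "j - 1" y] by simp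

lemma conjp_eq_vsum:
  assumes "1 \<le> j" "j \<le> d" "U (Suc j) < x" "x \<le> U j"
  shows "conjp lam x = V j"
proof -
  have "{y. 0 < y \<and> x \<le> prt lam y} = {0<..V j}"
    using le_prt_iff_u_le_prt[OF assms] u_le_prt_iff[OF assms(1,2)] by auto
  then show ?thesis unfolding conjp_def by simp
qed

lemma prt_lam_plus:
  assumes "s \<le> d"
  shows "prt (lam_plus lam s) y = (if y = Suc (V s) then Suc (U (Suc s)) else prt lam y)"
proof (cases "s < d")
  case True
  have s: "V s < V (Suc s)" "V (Suc s) \<le> length lam"
    using vsum_less[of s "Suc s"] vsum_le_length[of "Suc s"] True by auto
  then have "lam ! V s = U (Suc s)"
    using prt_eq_u[of "Suc s" "Suc (V s)"] True unfolding prt_def by simp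
  then have "lam_plus lam s = lam[V s := Suc (U (Suc s))]"
    unfolding lam_plus_def add_cell_def ys_eq_vsum using s by simp
  then show ?thesis using prt_list_update[of "V s" lam] s by simp
next
  case False
  then have "s = d" using assms by simp
  then have "lam_plus lam s = lam @ [1]" "U (Suc s) = 0"
    unfolding lam_plus_def add_cell_def ys_eq_vsum using vsum_ndist u_eq_0[of "Suc d"] by simp_all
  then show ?thesis using prt_append_single[of lam 1 y] vsum_ndist \<open>s = d\<close> by simp
qed

lemma prt_lam_minus:
  assumes r: "1 \<le> r" "r \<le> d"
  shows "prt (lam_minus lam r) y = (if y = V r then U r - 1 else prt lam y)"
proof -
  have vr: "0 < V r" "V r \<le> length lam"
    using vsum_less[of 0 r] vsum_le_length[of r] r by (auto simp: vsum_def)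
  then have "lam ! (V r - 1) = U r"
    using prt_eq_u[of r "V r"] vsum_less[of "r - 1" r] r unfolding prt_def by simp
  then have minus: "lam_minus lam r = filter (\<lambda>p. 0 < p) (lam[V r - 1 := U r - 1])"
    unfolding lam_minus_def remove_cell_def ys_eq_vsum using r by simp
  show ?thesis
  proof (cases "U r = 1")
    case False
    then have "0 < U r - 1" using u_pos[OF r] by simp
    then have "\<forall>p\<in>set (lam[V r - 1 := U r - 1]). 0 < p"
      using parts_pos by (auto dest: set_update_subset_insert[THEN subsetD])
    then show ?thesis unfolding minus using prt_list_update[of "V r - 1" lam] vr by auto
  next
    case True
    have "r = d"
      using u_less[of r "Suc r"] u_pos[of "Suc r"] True r by (cases "r < d") auto
    then have last: "V r = length lam" using vsum_ndist by simp
    obtain init a where lam_eq: "lam = init @ [a]" using vr by (cases lam rule: rev_cases) auto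
    have "V r - 1 = length init" "U r - 1 = 0" using last lam_eq True by simp_all
    then have "lam[V r - 1 := U r - 1] = init @ [0]" by (simp add: lam_eq)
    moreover have "\<forall>p\<in>set init. 0 < p" using parts_pos lam_eq by simp
    ultimately have "lam_minus lam r = init" unfolding minus by simp
    then show ?thesis
      using prt_append_single[of init a y] prt_beyond_length[of init y] last lam_eq True by auto
  qed
qed

lemma cell_extension_lam_plus:
  assumes "s \<le> d"
  shows "cell_extension lam (lam_plus lam s) (Suc (U (Suc s))) (Suc (V s))"
proof
  show "prt lam (Suc (V s)) = Suc (U (Suc s)) - 1"
  proof (cases "s < d")
    case True
    then show ?thesis using prt_eq_u[of "Suc s" "Suc (V s)"] vsum_less[of s "Suc s"] by simp
  next
    case False
    then show ?thesis
      using assms vsum_ndist prt_beyond_length[of lam "Suc (V s)"] u_eq_0[of "Suc s"] by simp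
  qed
  show "\<And>y. 0 < y \<Longrightarrow> Suc (U (Suc s)) \<le> prt lam y \<longleftrightarrow> y < Suc (V s)"
    using u_Suc_less_prt_iff[OF assms] by (simp add: Suc_le_eq less_Suc_eq_le)
qed (simp_all add: prt_lam_plus[OF assms])

lemma cell_extension_lam_minus:
  assumes r: "1 \<le> r" "r \<le> d"
  shows "cell_extension (lam_minus lam r) lam (U r) (V r)"
proof
  show "0 < V r" using vsum_less[of 0 r] r by (simp add: vsum_def)
  have "prt lam (V r) = U r" using prt_eq_u[of r "V r"] vsum_less[of "r - 1" r] r by simp
  then show "\<And>y. prt lam y = (if y = V r then U r else prt (lam_minus lam r) y)"
    using prt_lam_minus[OF r] by simp
  show "\<And>y. 0 < y \<Longrightarrow> U r \<le> prt (lam_minus lam r) y \<longleftrightarrow> y < V r"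
    using prt_lam_minus[OF r] u_le_prt_iff[OF r] u_pos[OF r] by auto
qed (use u_pos[OF r] prt_lam_minus[OF r] in simp_all)

lemma conjp_lam_minus: "1 \<le> r \<Longrightarrow> r \<le> d \<Longrightarrow> x \<noteq> U r \<Longrightarrow> conjp (lam_minus lam r) x = conjp lam x"
  using cell_extension.conjp_rho[OF cell_extension_lam_minus] by simp

end

section \<open>Monomials in q and t\<close>

locale indep_qt =
  fixes q t :: "'a::field"
  assumes q_nonzero: "q \<noteq> 0" and t_nonzero: "t \<noteq> 0"
    and indep: "\<And>a b :: int. q powi a * t powi b = 1 \<Longrightarrow> a = 0 \<and> b = 0"
begin

abbreviation M where "M \<equiv> mon q t"
abbreviation K where "K \<equiv> brk q t"

lemma mon_nonzero [simp]: "M a b \<noteq> 0"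
  unfolding mon_def using q_nonzero t_nonzero by (simp add: power_int_not_zero)

lemma mon_mult: "M a b * M c e = M (a + c) (b + e)"
  unfolding mon_def using q_nonzero t_nonzero by (simp add: power_int_add ac_simps)

lemma brk_0_1: "K 0 1 = 1 - t"
  unfolding brk_def mon_def by simp

lemma brk_1_0: "K 1 0 = 1 - q"
  unfolding brk_def mon_def by simp

lemma brk_nonzero: "a \<noteq> 0 \<or> b \<noteq> 0 \<Longrightarrow> K a b \<noteq> 0"
  unfolding brk_def mon_def using indep[of a b] by auto

lemma q_ne_1: "q \<noteq> 1" and t_ne_1: "t \<noteq> 1"
  using brk_nonzero[of 1 0] brk_nonzero[of 0 1] by (simp_all add: brk_1_0 brk_0_1)

lemma mon_diff_eq: "M a b - M c e = M a b * K (c - a) (e - b)"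
  unfolding brk_def by (simp add: right_diff_distrib mon_mult)

lemma one_minus_mon: "a + c = a' \<Longrightarrow> b + e = b' \<Longrightarrow> 1 - M c e = (M a b - M a' b') / M a b"
  using mon_mult[of a b c e] by (simp add: field_simps)

lemma mon_eq_iff: "M a b = M c e \<longleftrightarrow> a = c \<and> b = e"
proof
  assume "M a b = M c e"
  then have "K (c - a) (e - b) = 0" using mon_diff_eq[of a b c e] by simp
  then show "a = c \<and> b = e" using brk_nonzero[of "c - a" "e - b"] by auto
qed simp

lemma brk_ratio_above:
  "K (c1 - a) (e1 - b) / K (c2 - a) (e2 - b) = (M a b - M c1 e1) / (M a b - M c2 e2)"
  by (simp add: mon_diff_eq)

lemma brk_ratio_below:
  "K (a - c1) (b - e1) / K (a - c2) (b - e2) = M (c2 - c1) (e2 - e1) * ((M a b - M c1 e1) / (M a b - M c2 e2))"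
proof -
  have "M (c2 - c1) (e2 - e1) = M c2 e2 / M c1 e1"
    using mon_mult[of "c2 - c1" "e2 - e1" c1 e1] by (simp add: field_simps)
  then show ?thesis
    using mon_diff_eq[of c1 e1 a b] mon_diff_eq[of c2 e2 a b] by (simp add: minus_diff_eq[symmetric, of "M a b"])
qed

lemma prod_mon_telescope:
  fixes Y :: "nat \<Rightarrow> int"
  shows "(\<Prod>i\<in>{0<..m}. M 0 (Y (i - 1) - Y i)) = M 0 (Y 0 - Y m)"
proof (induction m)
  case (Suc m)
  have "{0<..Suc m} = insert (Suc m) {0<..m}" by auto
  then show ?case using Suc mon_mult[of 0 "Y m - Y (Suc m)" 0 "Y 0 - Y m"] by (simp add: ac_simps)
qed (simp add: mon_def)

lemma prod_brk_ratio_below: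
  fixes X Y :: "nat \<Rightarrow> int"
  shows "(\<Prod>i\<in>{0<..m}. K (a - X (i - 1)) (b - Y i) / K (a - X (i - 1)) (b - Y (i - 1))) =
    M 0 (Y 0 - Y m) * (\<Prod>i\<in>{0<..m}. (M a b - M (X (i - 1)) (Y i)) / (M a b - M (X (i - 1)) (Y (i - 1))))"
proof -
  have "(\<Prod>i\<in>{0<..m}. K (a - X (i - 1)) (b - Y i) / K (a - X (i - 1)) (b - Y (i - 1))) =
    (\<Prod>i\<in>{0<..m}. M 0 (Y (i - 1) - Y i) *
      ((M a b - M (X (i - 1)) (Y i)) / (M a b - M (X (i - 1)) (Y (i - 1)))))"
    by (simp only: brk_ratio_below diff_self)
  then show ?thesis by (simp only: prod.distrib prod_mon_telescope)
qed

lemma brk_products_plus_eq: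
  fixes X Y :: "nat \<Rightarrow> int"
  assumes "s \<le> n"
  shows "(\<Prod>i\<in>{s<..n}. K (X (i - 1) - a) (Y i - b) / K (X i - a) (Y i - b)) *
    (\<Prod>i\<in>{0<..s}. K (a - X (i - 1)) (b - Y i) / K (a - X (i - 1)) (b - Y (i - 1))) =
    M 0 (Y 0 - Y s) *
    ((\<Prod>i\<in>{1..n}. M a b - M (X (i - 1)) (Y i)) / (\<Prod>i\<in>{0..n} - {s}. M a b - M (X i) (Y i)))"
  unfolding brk_ratio_above prod_brk_ratio_below prod_divide_split_at[OF assms] by (simp only: ac_simps)

lemma brk_products_minus_eq:
  fixes X Y :: "nat \<Rightarrow> int"
  assumes r: "1 \<le> r" "r \<le> n" and "Y 0 = 0"
    and "M a b \<noteq> M (X r) (Y r)" "M a b \<noteq> M (X (r - 1)) (Y (r - 1))"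
  shows "(c1 / K (X r - a) (Y r - b)) *
    (\<Prod>i\<in>{r<..n}. K (X (i - 1) - a) (Y i - b) / K (X i - a) (Y i - b)) *
    (\<Prod>i\<in>{0<..<r}. K (a - X (i - 1)) (b - Y i) / K (a - X (i - 1)) (b - Y (i - 1))) *
    (c2 / K (a - X (r - 1)) (b - Y (r - 1))) =
    - (c1 * c2) * M (X (r - 1)) 0 * M a b *
      ((\<Prod>i\<in>{1..n} - {r}. M a b - M (X (i - 1)) (Y i)) / (\<Prod>i\<in>{0..n}. M a b - M (X i) (Y i)))"
proof -
  define P where "P = M a b"
  define Ar where "Ar = M (X r) (Y r)"
  define Ar' where "Ar' = M (X (r - 1)) (Y (r - 1))"
  define hi where "hi = (\<Prod>i\<in>{r<..n}. (P - M (X (i - 1)) (Y i)) / (P - M (X i) (Y i)))"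
  define lo where "lo = (\<Prod>i\<in>{0<..<r}. (P - M (X (i - 1)) (Y i)) / (P - M (X (i - 1)) (Y (i - 1))))"
  have lower: "{0<..<r} = {0<..r - 1}" using r by auto
  have lo_eq: "(\<Prod>i\<in>{0<..<r}. K (a - X (i - 1)) (b - Y i) / K (a - X (i - 1)) (b - Y (i - 1))) =
      M 0 (- Y (r - 1)) * lo"
    unfolding lo_def P_def lower prod_brk_ratio_below \<open>Y 0 = 0\<close> by simp
  have hi_eq: "(\<Prod>i\<in>{r<..n}. K (X (i - 1) - a) (Y i - b) / K (X i - a) (Y i - b)) = hi"
    unfolding hi_def P_def brk_ratio_above ..
  have brk_eq: "K (X r - a) (Y r - b) = (P - Ar) / P" "K (a - X (r - 1)) (b - Y (r - 1)) = - ((P - Ar') / Ar')"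
    using mon_diff_eq[of a b "X r" "Y r"] mon_diff_eq[of "X (r - 1)" "Y (r - 1)" a b]
    unfolding P_def Ar_def Ar'_def by (simp_all add: field_simps)
  have split: "(\<Prod>i\<in>{1..n} - {r}. P - M (X (i - 1)) (Y i)) / (\<Prod>i\<in>{0..n}. P - M (X i) (Y i)) =
      hi * lo / ((P - Ar') * (P - Ar))"
    unfolding hi_def lo_def Ar_def Ar'_def by (rule prod_divide_split_around[OF r])
  have corner: "M (X (r - 1)) 0 = Ar' * M 0 (- Y (r - 1))"
    unfolding Ar'_def by (simp add: mon_mult)
  have "P \<noteq> 0" "Ar' \<noteq> 0" "P - Ar \<noteq> 0" "P - Ar' \<noteq> 0"
    using assms unfolding P_def Ar_def Ar'_def by simp_all
  then show ?thesis
    unfolding P_def[symmetric] lo_eq hi_eq brk_eq split corner by (simp add: field_simps)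
qed

end

section \<open>Transition probabilities\<close>

locale partition_qt = young lam + indep_qt q t for lam :: "nat list" and q t :: "'a::field"
begin

abbreviation X where "X \<equiv> xs lam"
abbreviation Y where "Y \<equiv> ys lam"
text \<open>
  Weight the cell (c, y) by q^(u_1 + 1 - c) t^(y - 1). Then addable_mon i is the weight of the cell
  added in \<lambda>^(+i), and corner_mon i that of the cell diagonally outside the last cell of the i-th
  block of equal rows.
\<close>
abbreviation addable_mon where "addable_mon i \<equiv> M (X i) (Y i)"
abbreviation corner_mon where "corner_mon i \<equiv> M (X (i - 1)) (Y i)"

lemma ys_0 [simp]: "Y 0 = 0"
  by (simp add: ys_def)

lemma nn_skew_plus: "s \<le> d \<Longrightarrow> nn_skew (lam_plus lam s) lam = Y s"
  using cell_extension.nn_skew_eq[OF cell_extension_lam_plus] by (simp add: ys_eq_vsum)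

lemma nn_skew_minus: "1 \<le> r \<Longrightarrow> r \<le> d \<Longrightarrow> nn_skew lam (lam_minus lam r) = Y r - 1"
  using cell_extension.nn_skew_eq[OF cell_extension_lam_minus] by (simp add: ys_eq_vsum)

lemma Aexp_eq:
  "1 \<le> r \<Longrightarrow> r \<le> d \<Longrightarrow> s \<le> d \<Longrightarrow> Aexp (lam_plus lam s) lam (lam_minus lam r) = X s - X (r - 1) - 1"
  using cell_extension.nn'_skew_eq[OF cell_extension_lam_plus, of s]
    cell_extension.nn'_skew_eq[OF cell_extension_lam_minus, of r]
  by (simp add: Aexp_def xs_eq)

lemma Bexp_eq:
  "1 \<le> r \<Longrightarrow> r \<le> d \<Longrightarrow> s \<le> d \<Longrightarrow> Bexp (lam_plus lam s) lam (lam_minus lam r) = Y s - Y r + 1"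
  by (simp add: Bexp_def nn_skew_plus nn_skew_minus)

lemma xs_strict_mono: "i < j \<Longrightarrow> j \<le> d \<Longrightarrow> X i < X j"
  using u_less[of "Suc i" "Suc j"] by (simp add: xs_eq)

lemma xs_mono: "i \<le> j \<Longrightarrow> j \<le> d \<Longrightarrow> X i \<le> X j"
  using xs_strict_mono by (cases "i = j") (auto simp: order_le_less)

lemma ys_strict_mono: "i < j \<Longrightarrow> j \<le> d \<Longrightarrow> Y i < Y j"
  using vsum_less by (simp add: ys_eq_vsum)

lemma ys_mono: "i \<le> j \<Longrightarrow> j \<le> d \<Longrightarrow> Y i \<le> Y j"
  using ys_strict_mono by (cases "i = j") (auto simp: order_le_less)

lemma corner_ne_addable: "1 \<le> r \<Longrightarrow> r \<le> d \<Longrightarrow> s \<le> d \<Longrightarrow> corner_mon r \<noteq> addable_mon s"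
  using xs_strict_mono[of "r - 1" r] ys_strict_mono[of s r] ys_strict_mono[of r s]
  by (cases s r rule: linorder_cases) (auto simp: mon_eq_iff)

end

lemma two_step_ratio_eq:
  fixes u v w Q Pm Br a b c d PA PB PC PD anu amu g :: "'a::field"
  assumes anu: "u * anu = a * PC / PB"
    and amu: "amu = - (w * Q * Pm) * (PD / (b * PA))"
    and g: "g = c / Pm * (d / Br) / w"
    and Q: "Q * v = Br"
    and cross: "a * b = - (c * d)"
    and nz: "u \<noteq> 0" "v \<noteq> 0" "w \<noteq> 0" "Pm \<noteq> 0" "Br \<noteq> 0" "b \<noteq> 0" "c \<noteq> 0" "d \<noteq> 0"
      "PA \<noteq> 0" "PB \<noteq> 0" "PD \<noteq> 0"
  shows "u / v * anu / amu / g = PA / PB * (PC / PD)"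
proof -
  have "anu = a * PC / (PB * u)" "Q = Br / v"
    using anu Q nz by (simp_all add: field_simps)
  then have "u / v * anu / amu / g = a * b / (- (c * d)) * (PA / PB * (PC / PD))"
    unfolding amu g using nz by (simp add: field_simps)
  then show ?thesis using cross nz by simp
qed

locale partition_qt_e = partition_qt lam q t for lam :: "nat list" and q t :: "'a::field" +
  fixes e :: int
  assumes e_cases: "e = 0 \<or> e = 1"
begin

text \<open>The weights of the cell added in \<lambda>^(+s) and of the cell removed in \<lambda>^(-r), shifted by (-e, e).\<close>
abbreviation nu_mon where "nu_mon s \<equiv> M (X s - e) (Y s + e)"
abbreviation mu_mon where "mu_mon r \<equiv> M (X (r - 1) + 1 - e) (Y r - 1 + e)"

lemma mu_mon_ne_addable:
  assumes "1 \<le> r" "r \<le> d" "i \<le> d"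
  shows "mu_mon r \<noteq> addable_mon i"
proof
  assume "mu_mon r = addable_mon i"
  then have "X (r - 1) + 1 - e = X i" "Y r - 1 + e = Y i" by (simp_all add: mon_eq_iff)
  moreover have "X i \<le> X (r - 1) \<and> Y i < Y r \<or> X (r - 1) < X i \<and> Y r \<le> Y i"
    using assms by (cases "i < r") (auto intro: xs_mono ys_strict_mono xs_strict_mono ys_mono)
  ultimately show False using e_cases by auto
qed

lemma nu_mon_ne_addable:
  assumes "s \<le> d" "i \<le> d" "i \<noteq> s"
  shows "nu_mon s \<noteq> addable_mon i"
proof
  assume "nu_mon s = addable_mon i"
  then have "X s - e = X i" "Y s + e = Y i" by (simp_all add: mon_eq_iff)
  moreover have "Y i < Y s \<or> X s < X i"
    using assms by (cases "i < s") (auto intro: ys_strict_mono xs_strict_mono)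
  ultimately show False using e_cases by auto
qed

lemma mu_mon_ne_corner:
  assumes "1 \<le> r" "r \<le> d" "1 \<le> i" "i \<le> d" "i \<noteq> r"
  shows "mu_mon r \<noteq> corner_mon i"
proof
  assume "mu_mon r = corner_mon i"
  then have "X (r - 1) + 1 - e = X (i - 1)" "Y r - 1 + e = Y i" by (simp_all add: mon_eq_iff)
  moreover have "X (i - 1) \<le> X (r - 1) \<and> Y i < Y r \<or> Y r < Y i"
    using assms by (cases "i < r") (auto intro: xs_mono ys_strict_mono)
  ultimately show False using e_cases by auto
qed

lemma mu_mon_ne_nu_mon:
  assumes "1 \<le> r" "r \<le> d" "s \<le> d"
  shows "mu_mon r \<noteq> nu_mon s"
proof
  assume "mu_mon r = nu_mon s"
  then have "X (r - 1) + 1 - e = X s - e" "Y r - 1 + e = Y s + e" by (simp_all add: mon_eq_iff)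
  moreover have "X s \<le> X (r - 1) \<or> Y r \<le> Y s"
    using assms by (cases "s < r") (auto intro: xs_mono ys_mono)
  ultimately show False by auto
qed

text \<open>It holds because e = 0 makes nu_mon s = addable_mon s and e = 1 makes mu_mon r = corner_mon r.\<close>
lemma nu_mu_cross_identity:
  "(nu_mon s - corner_mon r) * (mu_mon r - addable_mon s) = - ((mu_mon r - nu_mon s) * (corner_mon r - addable_mon s))"
  using e_cases by (auto simp: algebra_simps)

lemma gamma_eq:
  assumes "1 \<le> r" "r \<le> d" "s \<le> d"
  shows "gamma q t (lam_plus lam s) lam (lam_minus lam r) =
    (mu_mon r - nu_mon s) / mu_mon r * ((corner_mon r - addable_mon s) / corner_mon r) / ((1 - q) * (1 - t))"
proof -
  have "1 - M (X s - X (r - 1) - 1) (Y s - Y r + 1) = (mu_mon r - nu_mon s) / mu_mon r"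
    "1 - M (X s - X (r - 1) - 1 + 1) (Y s - Y r + 1 - 1) = (corner_mon r - addable_mon s) / corner_mon r"
    by (rule one_minus_mon; simp)+
  then show ?thesis unfolding gamma_def Aexp_eq[OF assms] Bexp_eq[OF assms] by (simp only:)
qed

lemma hook_ratio_Rset_lam_plus:
  assumes s: "s \<le> d"
  shows "hook_ratio q t e (1 - e) (lam_plus lam s) lam (Rset (lam_plus lam s) lam) =
    (\<Prod>j\<in>{s<..d}. K (X (j - 1) - (X s - e)) (Y j - (Y s + e)) / K (X j - (X s - e)) (Y j - (Y s + e)))"
proof -
  interpret cell_extension lam "lam_plus lam s" "Suc (U (Suc s))" "Suc (V s)"
    by (rule cell_extension_lam_plus[OF s])
  let ?H = "\<lambda>j x. K (int (U (Suc s)) - int x + e) (int (V j) - int (V s) - e)"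
  have "{0<..<Suc (U (Suc s))} = {U (Suc d)<..U (Suc s)}" using u_eq_0[of "Suc d"] by auto
  then have "hook_ratio q t e (1 - e) (lam_plus lam s) lam (Rset (lam_plus lam s) lam) =
    (\<Prod>x\<in>{U (Suc d)<..U (Suc s)}. K (int (U (Suc s)) - int x + e) (int (conjp lam x) - int (V s) - e) /
      K (int (U (Suc s)) + 1 - int x + e) (int (conjp lam x) - int (V s) - e))"
    unfolding hook_ratio_Rset by (simp add: algebra_simps)
  also have "\<dots> = (\<Prod>j\<in>{s<..d}. ?H j (U j) / ?H j (U (Suc j)))"
  proof (rule prod_blocks_telescope_antimono[OF s])
    fix j x assume j: "s < j" "j \<le> d" "U (Suc j) < x" "x \<le> U j"
    then have "conjp lam x = V j" by (intro conjp_eq_vsum) auto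
    then show "K (int (U (Suc s)) - int x + e) (int (conjp lam x) - int (V s) - e) /
        K (int (U (Suc s)) + 1 - int x + e) (int (conjp lam x) - int (V s) - e) = ?H j x / ?H j (x - 1)"
      using j by (simp add: of_nat_diff algebra_simps)
  next
    fix j x assume j: "s < j" "j \<le> d" "U (Suc j) \<le> x" "x \<le> U j"
    then have "U j \<le> U (Suc s)" "V s < V j" using u_antimono vsum_less by auto
    then show "?H j x \<noteq> 0" using j e_cases by (intro brk_nonzero) auto
  qed (use u_antimono in auto)
  also have "\<dots> = (\<Prod>j\<in>{s<..d}. K (X (j - 1) - (X s - e)) (Y j - (Y s + e)) / K (X j - (X s - e)) (Y j - (Y s + e)))"
    by (intro prod.cong) (auto simp: xs_eq ys_eq_vsum algebra_simps)
  finally show ?thesis .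
qed

lemma hook_ratio_Cset_lam_plus:
  assumes s: "s \<le> d"
  shows "hook_ratio q t (1 - e) e (lam_plus lam s) lam (Cset (lam_plus lam s) lam) =
    (\<Prod>j\<in>{0<..s}. K ((X s - e) - X (j - 1)) ((Y s + e) - Y j) /
      K ((X s - e) - X (j - 1)) ((Y s + e) - Y (j - 1)))"
proof -
  interpret cell_extension lam "lam_plus lam s" "Suc (U (Suc s))" "Suc (V s)"
    by (rule cell_extension_lam_plus[OF s])
  let ?G = "\<lambda>j y. K (int (U j) - int (U (Suc s)) - e) (int (V s) - int y + e)"
  have "{0<..<Suc (V s)} = {V 0<..V s}" by (auto simp: vsum_def)
  then have "hook_ratio q t (1 - e) e (lam_plus lam s) lam (Cset (lam_plus lam s) lam) =
    (\<Prod>y\<in>{V 0<..V s}. K (int (prt lam y) - int (U (Suc s)) - e) (int (V s) - int y + e) /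
      K (int (prt lam y) - int (U (Suc s)) - e) (int (V s) + 1 - int y + e))"
    unfolding hook_ratio_Cset by (simp add: algebra_simps)
  also have "\<dots> = (\<Prod>j\<in>{0<..s}. ?G j (V j) / ?G j (V (j - 1)))"
  proof (rule prod_blocks_telescope_mono[OF mono_vsum])
    fix j y assume j: "0 < j" "j \<le> s" "V (j - 1) < y" "y \<le> V j"
    then have "prt lam y = U j" using s by (intro prt_eq_u) auto
    then show "K (int (prt lam y) - int (U (Suc s)) - e) (int (V s) - int y + e) /
        K (int (prt lam y) - int (U (Suc s)) - e) (int (V s) + 1 - int y + e) = ?G j y / ?G j (y - 1)"
      using j by (simp add: of_nat_diff algebra_simps)
  next
    fix j y assume j: "0 < j" "j \<le> s" "V (j - 1) \<le> y" "y \<le> V j"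
    then have "U (Suc s) < U j" "V j \<le> V s" using s u_less monoD[OF mono_vsum] by auto
    then show "?G j y \<noteq> 0" using j e_cases by (intro brk_nonzero) auto
  qed
  also have "\<dots> = (\<Prod>j\<in>{0<..s}. K ((X s - e) - X (j - 1)) ((Y s + e) - Y j) /
      K ((X s - e) - X (j - 1)) ((Y s + e) - Y (j - 1)))"
    by (intro prod.cong) (auto simp: xs_eq ys_eq_vsum algebra_simps)
  finally show ?thesis .
qed

lemma hook_ratio_Rset_lam_minus:
  assumes r: "1 \<le> r" "r \<le> d"
  shows "hook_ratio q t e (1 - e) lam (lam_minus lam r) (Rset lam (lam_minus lam r)) =
    K e (1 - e) / K (X r - (X (r - 1) + 1 - e)) (Y r - (Y r - 1 + e)) *
    (\<Prod>j\<in>{r<..d}. K (X (j - 1) - (X (r - 1) + 1 - e)) (Y j - (Y r - 1 + e)) /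
      K (X j - (X (r - 1) + 1 - e)) (Y j - (Y r - 1 + e)))"
proof -
  interpret cell_extension "lam_minus lam r" lam "U r" "V r"
    by (rule cell_extension_lam_minus[OF r])
  let ?F = "\<lambda>x. K (int (U r) - 1 - int x + e) (int (conjp lam x) - int (V r) + (1 - e)) /
    K (int (U r) - int x + e) (int (conjp lam x) - int (V r) + (1 - e))"
  let ?H = "\<lambda>j x. K (int (U r) - 1 - int x + e) (int (V j) - int (V r) + 1 - e)"
  have gap: "U (Suc r) < U r" using u_less[of r "Suc r"] r by simp
  have "hook_ratio q t e (1 - e) lam (lam_minus lam r) (Rset lam (lam_minus lam r)) = (\<Prod>x\<in>{0<..<U r}. ?F x)"
    unfolding hook_ratio_Rset using conjp_lam_minus[OF r] by (intro prod.cong) auto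
  also have "{0<..<U r} = {U (Suc d)<..U (Suc r)} \<union> {U (Suc r)<..U r - 1}"
    using gap u_eq_0[of "Suc d"] by auto
  also have "(\<Prod>x\<in>\<dots>. ?F x) = (\<Prod>x\<in>{U (Suc d)<..U (Suc r)}. ?F x) * (\<Prod>x\<in>{U (Suc r)<..U r - 1}. ?F x)"
    by (rule prod.union_disjoint) auto
  also have "(\<Prod>x\<in>{U (Suc d)<..U (Suc r)}. ?F x) = (\<Prod>j\<in>{r<..d}. ?H j (U j) / ?H j (U (Suc j)))"
  proof (rule prod_blocks_telescope_antimono[OF r(2)])
    fix j x assume j: "r < j" "j \<le> d" "U (Suc j) < x" "x \<le> U j"
    then have "conjp lam x = V j" using r by (intro conjp_eq_vsum) auto
    then show "?F x = ?H j x / ?H j (x - 1)" using j by (simp add: of_nat_diff algebra_simps)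
  next
    fix j x assume j: "r < j" "j \<le> d" "U (Suc j) \<le> x" "x \<le> U j"
    then have "U j < U r" "V r < V j" using r u_less vsum_less by auto
    then show "?H j x \<noteq> 0" using j e_cases by (intro brk_nonzero) auto
  qed (use r u_antimono in auto)
  also have "(\<Prod>x\<in>{U (Suc r)<..U r - 1}. ?F x) = (\<Prod>x\<in>{U (Suc r)<..U r - 1}. ?H r x / ?H r (x - 1))"
    using r by (intro prod.cong) (auto simp: conjp_eq_vsum of_nat_diff algebra_simps)
  also have "\<dots> = ?H r (U r - 1) / ?H r (U (Suc r))"
    using gap e_cases by (intro prod_greaterThanAtMost_telescope) (auto intro!: brk_nonzero)
  also have "\<dots> = K e (1 - e) / K (X r - (X (r - 1) + 1 - e)) (Y r - (Y r - 1 + e))"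
    using r gap by (simp add: xs_eq of_nat_diff algebra_simps)
  also have "(\<Prod>j\<in>{r<..d}. ?H j (U j) / ?H j (U (Suc j))) =
      (\<Prod>j\<in>{r<..d}. K (X (j - 1) - (X (r - 1) + 1 - e)) (Y j - (Y r - 1 + e)) /
        K (X j - (X (r - 1) + 1 - e)) (Y j - (Y r - 1 + e)))"
    using r by (intro prod.cong) (auto simp: xs_eq ys_eq_vsum algebra_simps)
  finally show ?thesis by (simp only: ac_simps)
qed

lemma hook_ratio_Cset_lam_minus:
  assumes r: "1 \<le> r" "r \<le> d"
  shows "hook_ratio q t (1 - e) e lam (lam_minus lam r) (Cset lam (lam_minus lam r)) =
    (\<Prod>j\<in>{0<..<r}. K ((X (r - 1) + 1 - e) - X (j - 1)) ((Y r - 1 + e) - Y j) /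
      K ((X (r - 1) + 1 - e) - X (j - 1)) ((Y r - 1 + e) - Y (j - 1))) *
    (K (1 - e) e / K ((X (r - 1) + 1 - e) - X (r - 1)) ((Y r - 1 + e) - Y (r - 1)))"
proof -
  interpret cell_extension "lam_minus lam r" lam "U r" "V r"
    by (rule cell_extension_lam_minus[OF r])
  let ?F = "\<lambda>y. K (int (prt lam y) - int (U r) + (1 - e)) (int (V r) - 1 - int y + e) /
    K (int (prt lam y) - int (U r) + (1 - e)) (int (V r) - int y + e)"
  let ?G = "\<lambda>j y. K (int (U j) - int (U r) + 1 - e) (int (V r) - 1 - int y + e)"
  have gap: "V (r - 1) < V r" using vsum_less[of "r - 1" r] r by simp
  have "hook_ratio q t (1 - e) e lam (lam_minus lam r) (Cset lam (lam_minus lam r)) = (\<Prod>y\<in>{0<..<V r}. ?F y)"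
    unfolding hook_ratio_Cset using prt_lam_minus[OF r] by (intro prod.cong) auto
  also have "{0<..<V r} = {V 0<..V (r - 1)} \<union> {V (r - 1)<..V r - 1}"
    using gap by (auto simp: vsum_def)
  also have "(\<Prod>y\<in>\<dots>. ?F y) = (\<Prod>y\<in>{V 0<..V (r - 1)}. ?F y) * (\<Prod>y\<in>{V (r - 1)<..V r - 1}. ?F y)"
    by (rule prod.union_disjoint) auto
  also have "(\<Prod>y\<in>{V 0<..V (r - 1)}. ?F y) = (\<Prod>j\<in>{0<..r - 1}. ?G j (V j) / ?G j (V (j - 1)))"
  proof (rule prod_blocks_telescope_mono[OF mono_vsum])
    fix j y assume j: "0 < j" "j \<le> r - 1" "V (j - 1) < y" "y \<le> V j"
    then have "prt lam y = U j" using r by (intro prt_eq_u) auto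
    then show "?F y = ?G j y / ?G j (y - 1)" using j by (simp add: of_nat_diff algebra_simps)
  next
    fix j y assume j: "0 < j" "j \<le> r - 1" "V (j - 1) \<le> y" "y \<le> V j"
    then have "U r < U j" "V j < V r" using r u_less vsum_less by auto
    then show "?G j y \<noteq> 0" using j e_cases by (intro brk_nonzero) auto
  qed
  also have "(\<Prod>y\<in>{V (r - 1)<..V r - 1}. ?F y) = (\<Prod>y\<in>{V (r - 1)<..V r - 1}. ?G r y / ?G r (y - 1))"
    using r by (intro prod.cong) (auto simp: prt_eq_u of_nat_diff algebra_simps)
  also have "\<dots> = ?G r (V r - 1) / ?G r (V (r - 1))"
    using gap e_cases by (intro prod_greaterThanAtMost_telescope) (auto intro!: brk_nonzero)
  also have "\<dots> = K (1 - e) e / K ((X (r - 1) + 1 - e) - X (r - 1)) ((Y r - 1 + e) - Y (r - 1))"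
    using r gap by (simp add: ys_eq_vsum of_nat_diff algebra_simps)
  also have "(\<Prod>j\<in>{0<..r - 1}. ?G j (V j) / ?G j (V (j - 1))) =
      (\<Prod>j\<in>{0<..<r}. K ((X (r - 1) + 1 - e) - X (j - 1)) ((Y r - 1 + e) - Y j) /
        K ((X (r - 1) + 1 - e) - X (j - 1)) ((Y r - 1 + e) - Y (j - 1)))"
    using r by (intro prod.cong) (auto simp: xs_eq ys_eq_vsum algebra_simps)
  finally show ?thesis .
qed


lemma alpha_e_lam_plus:
  assumes "s \<le> d"
  shows "t powi Y s * alpha_e q t e (lam_plus lam s) lam =
    (\<Prod>i\<in>{1..d}. nu_mon s - corner_mon i) / (\<Prod>i\<in>{0..d} - {s}. nu_mon s - addable_mon i)"
proof -
  have "t powi Y s * M 0 (- Y s) = 1"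
    unfolding mon_def using t_nonzero by (simp add: power_int_minus)
  then show ?thesis
    unfolding alpha_e_def hook_ratio_Rset_lam_plus[OF assms] hook_ratio_Cset_lam_plus[OF assms]
      brk_products_plus_eq[OF assms] by (simp add: mult.assoc[symmetric])
qed

lemma alpha_e_lam_minus:
  assumes r: "1 \<le> r" "r \<le> d"
  shows "alpha_e q t e lam (lam_minus lam r) =
    - ((1 - q) * (1 - t)) * M (X (r - 1)) 0 * mu_mon r *
    ((\<Prod>i\<in>{1..d} - {r}. mu_mon r - corner_mon i) / (\<Prod>i\<in>{0..d}. mu_mon r - addable_mon i))"
proof -
  have "K e (1 - e) * K (1 - e) e = (1 - q) * (1 - t)"
    using e_cases brk_0_1 brk_1_0 by auto
  moreover have "mu_mon r \<noteq> addable_mon r" "mu_mon r \<noteq> addable_mon (r - 1)"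
    using mu_mon_ne_addable r by auto
  ultimately show ?thesis
    unfolding alpha_e_def hook_ratio_Rset_lam_minus[OF r] hook_ratio_Cset_lam_minus[OF r] mult.assoc[symmetric]
    by (subst brk_products_minus_eq[OF r]) simp_all
qed

lemma two_step_formula:
  assumes r: "1 \<le> r" "r \<le> d" and s: "s \<le> d"
  shows "t powi (Bexp (lam_plus lam s) lam (lam_minus lam r) - 1) * alpha_e q t e (lam_plus lam s) lam /
      alpha_e q t e lam (lam_minus lam r) / gamma q t (lam_plus lam s) lam (lam_minus lam r) =
    (\<Prod>i\<in>{0..d} - {s}. (mu_mon r - addable_mon i) / (nu_mon s - addable_mon i)) *
    (\<Prod>i\<in>{1..d} - {r}. (nu_mon s - corner_mon i) / (mu_mon r - corner_mon i))"
proof -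
  let ?PA = "\<Prod>i\<in>{0..d} - {s}. mu_mon r - addable_mon i"
  let ?PB = "\<Prod>i\<in>{0..d} - {s}. nu_mon s - addable_mon i"
  let ?PC = "\<Prod>i\<in>{1..d} - {r}. nu_mon s - corner_mon i"
  let ?PD = "\<Prod>i\<in>{1..d} - {r}. mu_mon r - corner_mon i"
  have "(\<Prod>i\<in>{1..d}. nu_mon s - corner_mon i) = (nu_mon s - corner_mon r) * ?PC"
    using r by (subst prod.remove[of _ r]) auto
  then have plus: "t powi Y s * alpha_e q t e (lam_plus lam s) lam = (nu_mon s - corner_mon r) * ?PC / ?PB"
    using alpha_e_lam_plus[OF s] by simp
  have "(\<Prod>i\<in>{0..d}. mu_mon r - addable_mon i) = (mu_mon r - addable_mon s) * ?PA"
    using s by (subst prod.remove[of _ s]) auto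
  then have minus: "alpha_e q t e lam (lam_minus lam r) =
      - ((1 - q) * (1 - t) * M (X (r - 1)) 0 * mu_mon r) * (?PD / ((mu_mon r - addable_mon s) * ?PA))"
    using alpha_e_lam_minus[OF r] by (simp add: mult.assoc)
  have corner: "M (X (r - 1)) 0 * t powi Y r = corner_mon r"
    unfolding mon_def by simp
  have "(1 - q) * (1 - t) \<noteq> 0"
    using q_ne_1 t_ne_1 by simp
  moreover have "?PA \<noteq> 0" "?PB \<noteq> 0" "?PD \<noteq> 0"
    using mu_mon_ne_addable[OF r] nu_mon_ne_addable[OF s] mu_mon_ne_corner[OF r] by (auto simp: prod_zero_iff)
  moreover have "t powi (Bexp (lam_plus lam s) lam (lam_minus lam r) - 1) = t powi Y s / t powi Y r"
    unfolding Bexp_eq[OF r s] using t_nonzero by (simp add: power_int_diff)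
  ultimately have "t powi (Bexp (lam_plus lam s) lam (lam_minus lam r) - 1) * alpha_e q t e (lam_plus lam s) lam /
      alpha_e q t e lam (lam_minus lam r) / gamma q t (lam_plus lam s) lam (lam_minus lam r) = ?PA / ?PB * (?PC / ?PD)"
    using two_step_ratio_eq[OF plus minus gamma_eq[OF r s] corner nu_mu_cross_identity] t_nonzero
      mu_mon_ne_nu_mon[OF r s] corner_ne_addable[OF r s] mu_mon_ne_addable[OF r s] by simp
  then show ?thesis by (simp add: prod_dividef)
qed

end

theorem proposition4p20:
  fixes lam :: "nat list" and q t :: "'a::field"
  assumes "is_partition lam"
    and "q \<noteq> 0" and "t \<noteq> 0"
    and indep: "\<And>a b :: int. q powi a * t powi b = 1 \<Longrightarrow> a = 0 \<and> b = 0"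
  defines "d \<equiv> ndist lam"
    and "X \<equiv> xs lam" and "Y \<equiv> ys lam"
  shows
   "(\<forall>s\<le>d.
      pp q t lam 0 s =
        (\<Prod>i\<in>{1..d}. mon q t (X s) (Y s) - mon q t (X (i - 1)) (Y i)) /
        (\<Prod>i\<in>{0..d} - {s}. mon q t (X s) (Y s) - mon q t (X i) (Y i))
    \<and> ppbar q t lam 0 s =
        (\<Prod>i\<in>{1..d}. mon q t (X s - 1) (Y s + 1) - mon q t (X (i - 1)) (Y i)) /
        (\<Prod>i\<in>{0..d} - {s}. mon q t (X s - 1) (Y s + 1) - mon q t (X i) (Y i)))
  \<and> (\<forall>r\<in>{1..d}. \<forall>s\<le>d.
      pp q t lam r s =
        (\<Prod>i\<in>{0..d} - {s}. (mon q t (X (r - 1) + 1) (Y r - 1) - mon q t (X i) (Y i)) /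
                             (mon q t (X s) (Y s) - mon q t (X i) (Y i))) *
        (\<Prod>i\<in>{1..d} - {r}. (mon q t (X s) (Y s) - mon q t (X (i - 1)) (Y i)) /
                             (mon q t (X (r - 1) + 1) (Y r - 1) - mon q t (X (i - 1)) (Y i)))
    \<and> ppbar q t lam r s =
        (\<Prod>i\<in>{0..d} - {s}. (mon q t (X (r - 1)) (Y r) - mon q t (X i) (Y i)) /
                             (mon q t (X s - 1) (Y s + 1) - mon q t (X i) (Y i))) *
        (\<Prod>i\<in>{1..d} - {r}. (mon q t (X s - 1) (Y s + 1) - mon q t (X (i - 1)) (Y i)) /
                             (mon q t (X (r - 1)) (Y r) - mon q t (X (i - 1)) (Y i))))"
proof -
  interpret partition_qt lam q t
    using assms by unfold_locales auto
  interpret alpha: partition_qt_e lam q t 0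
    by unfold_locales simp
  interpret alphabar: partition_qt_e lam q t 1
    by unfold_locales simp
  show ?thesis
    unfolding d_def X_def Y_def pp_def ppbar_def P1_def P1bar_def P2_def P2bar_def beta_def betabar_def
      alpha_eq_alpha_e alphabar_eq_alpha_e
    using alpha.alpha_e_lam_plus alphabar.alpha_e_lam_plus alpha.two_step_formula alphabar.two_step_formula
    by (simp add: nn_skew_plus)
qed

end
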